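(* In the standing setting, let $(A,B,R,\sigma)$ be a normalized context. If $\mathcal{FC}\neq\varnothing$, then there exists a family $\{(g_i,f_i)\}_{i\in I}\subseteq\mathcal{FC}$ such that $B=\bigcup_{i\in I}B_i^\top$ with $B_i^\top\cap B_j^\top=\varnothing$ for all $i\ne j$; $B=\bigcup_{i\in I}B_i^\bot$ with $B_i^\bot\cap B_j^\bot=\varnothing$ for all $i\ne j$; $A=\bigcup_{i\in I}A_i^\top$ with $A_i^\top\cap A_j^\top=\varnothing$ for all $i\ne j$; $A=\bigcup_{i\in I}A_i^\bot$ with $A_i^\bot\cap A_j^\bot=\varnothing$ for all $i\ne j$.
   Context: Adjoint triple: for posets $(P_1,\le_1),(P_2,\le_2),(P_3,\le_3)$, maps $\&\colon P_1\times P_2\to P_3$, $\swarrow\colon P_3\times P_2\to P_1$, $\nwarrow\colon P_3\times P_1\to P_2$ with $x\le_1 z\swarrow y \iff x\,\&\,y\le_3 z \iff y\le_2 z\nwarrow x$ for all $x,y,z$. For lower-bounded posets, $\&$ has zero-divisors if there are $x\ne\bot_1$, $y\neq\bot_2$ with $x\,\&\,y=\bot_3$. Standing setting: $(L_1,\preceq_1,\bot_1,\top_1)$ and $(L_2,\preceq_2,\bot_2,\top_2)$ are complete lattices and $(P,\le,\bot,\top)$ is a bounded poset. A multi-adjoint frame consists of adjoint triples $(\&_i,\swarrow^i,\nwarrow_i)$, $i=1,\dots,n$, with respect to $L_1,L_2,P$; a property-oriented frame consists of adjoint triples $(\&^p_j,\swarrow_p^j,\nwarrow^p_j)$, $j=1,\dots,m$,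 with respect to $P,L_2,L_1$; an object-oriented frame consists of adjoint triples $(\&^o_k,\swarrow_o^k,\nwarrow^o_k)$, $k=1,\dots,s$, with respect to $L_1,P,L_2$. All conjunctors $\&_i,\&^p_j,\&^o_k$ have no zero-divisors. A context $(A,B,R,\sigma)$ consists of non-empty sets $A,B$, $R\colon A\times B\to P$, and maps $\sigma,\sigma_p,\sigma_o$ from $A\times B$ to the index sets of the three frames. It is normalized if every $a\in A$ has $b_1,b_2\in B$ with $R(a,b_1)\ne\bot$, $R(a,b_2)=\bot$, and every $b\in B$ has $a_1,a_2\in A$ with $R(a_1,b)\neq\bot$, $R(a_2,b)=\bot$. Fuzzy necessity operators: $g^{\uparrow_N}(a)=\inf\{g(b)\swarrow_o^{\sigma_o(a,b)}R(a,b)\mid b\in B\}$ for $g\in L_2^B$, and $f^{\downarrow^N}(b)=\inf\{f(a)\nwarrow^p_{\sigma_p(a,b)}R(a,b)\mid a\in A\}$ for $f\in L_1^A$. $\mathcal F_N=\{(g,f)\mid g\in L_2^B,\ f\in L_1^A,\ g^{\uparrow_N}=f,\ f^{\downarrow^N}=g\}$. For $X\subseteq B$, $\chi_X\in L_2^B$ takes value $\top_2$ on $X$ and $\bot_2$ elsewhere; for $Y\subseteq A$, $\chi_Y\in L_1^A$ takes value $\top_1$ on $Y$ and $\bot_1$ elsewhere. $\mathcal{FC}=\{(\chi_X,\chi_Y)\in\mathcal F_N\mid \varnothing\ne X\subsetneq B,\ \varnothing\neq Y\subsetneq A\}$. For $(g_i,f_i)\in\mathcal{FC}$: $B_i^\top=\{b\mid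 g_i(b)=\top_2\}$, $B_i^\bot=\{b\mid g_i(b)=\bot_2\}$, $A_i^\top=\{a\mid f_i(a)=\top_1\}$, $A_i^\bot=\{a\mid f_i(a)=\bot_1\}$. *)

theory Defs
  imports Main
begin

definition adjoint_triple ::
  "('p1::order \<Rightarrow> 'p2::order \<Rightarrow> 'p3::order) \<Rightarrow> ('p3 \<Rightarrow> 'p2 \<Rightarrow> 'p1) \<Rightarrow> ('p3 \<Rightarrow> 'p1 \<Rightarrow> 'p2) \<Rightarrow> bool"
  where "adjoint_triple cj sw nw \<longleftrightarrow>
    (\<forall>x y z. (x \<le> sw z y \<longleftrightarrow> cj x y \<le> z) \<and> (cj x y \<le> z \<longleftrightarrow> y \<le> nw z x))"

definition conj_no_zero_div ::
  "('p1::order_bot \<Rightarrow> 'p2::order_bot \<Rightarrow> 'p3::order_bot) \<Rightarrow> bool"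
  where "conj_no_zero_div cj \<longleftrightarrow> (\<forall>x y. x \<noteq> bot \<longrightarrow> y \<noteq> bot \<longrightarrow> cj x y \<noteq> bot)"

definition normalized_context :: "'a set \<Rightarrow> 'b set \<Rightarrow> ('a \<Rightarrow> 'b \<Rightarrow> 'p::order_bot) \<Rightarrow> bool"
  where "normalized_context A B R \<longleftrightarrow>
    (\<forall>a\<in>A. (\<exists>b1\<in>B. R a b1 \<noteq> bot) \<and> (\<exists>b2\<in>B. R a b2 = bot)) \<and>
    (\<forall>b\<in>B. (\<exists>a1\<in>A. R a1 b \<noteq> bot) \<and> (\<exists>a2\<in>A. R a2 b = bot))"

definition up_N ::
  "'b set \<Rightarrow> ('a \<Rightarrow> 'b \<Rightarrow> 'p) \<Rightarrow> ('a \<Rightarrow> 'b \<Rightarrow> nat) \<Rightarrow> (nat \<Rightarrow> 'l2 \<Rightarrow> 'p \<Rightarrow> 'l1::complete_lattice)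
   \<Rightarrow> ('b \<Rightarrow> 'l2) \<Rightarrow> 'a \<Rightarrow> 'l1"
  where "up_N B R sigma_o swO g a = (INF b\<in>B. swO (sigma_o a b) (g b) (R a b))"

definition down_N ::
  "'a set \<Rightarrow> ('a \<Rightarrow> 'b \<Rightarrow> 'p) \<Rightarrow> ('a \<Rightarrow> 'b \<Rightarrow> nat) \<Rightarrow> (nat \<Rightarrow> 'l1 \<Rightarrow> 'p \<Rightarrow> 'l2::complete_lattice)
   \<Rightarrow> ('a \<Rightarrow> 'l1) \<Rightarrow> 'b \<Rightarrow> 'l2"
  where "down_N A R sigma_p nwP f b = (INF a\<in>A. nwP (sigma_p a b) (f a) (R a b))"

text \<open>The set F_N; functions g \<in> L2^B, f \<in> L1^A are compared on their domains B and A.\<close>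
definition FN ::
  "'a set \<Rightarrow> 'b set \<Rightarrow> ('a \<Rightarrow> 'b \<Rightarrow> 'p) \<Rightarrow> ('a \<Rightarrow> 'b \<Rightarrow> nat) \<Rightarrow> ('a \<Rightarrow> 'b \<Rightarrow> nat)
   \<Rightarrow> (nat \<Rightarrow> 'l1::complete_lattice \<Rightarrow> 'p \<Rightarrow> 'l2::complete_lattice) \<Rightarrow> (nat \<Rightarrow> 'l2 \<Rightarrow> 'p \<Rightarrow> 'l1)
   \<Rightarrow> (('b \<Rightarrow> 'l2) \<times> ('a \<Rightarrow> 'l1)) set" where
  "FN A B R sigma_p sigma_o nwP swO =
    {(g, f). (\<forall>a\<in>A. up_N B R sigma_o swO g a = f a) \<and> (\<forall>b\<in>B. down_N A R sigma_p nwP f b = g b)}"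

definition chi :: "'x set \<Rightarrow> 'x \<Rightarrow> 'l::complete_lattice"
  where "chi X x = (if x \<in> X then top else bot)"

definition FC ::
  "'a set \<Rightarrow> 'b set \<Rightarrow> ('a \<Rightarrow> 'b \<Rightarrow> 'p) \<Rightarrow> ('a \<Rightarrow> 'b \<Rightarrow> nat) \<Rightarrow> ('a \<Rightarrow> 'b \<Rightarrow> nat)
   \<Rightarrow> (nat \<Rightarrow> 'l1::complete_lattice \<Rightarrow> 'p \<Rightarrow> 'l2::complete_lattice) \<Rightarrow> (nat \<Rightarrow> 'l2 \<Rightarrow> 'p \<Rightarrow> 'l1)
   \<Rightarrow> (('b \<Rightarrow> 'l2) \<times> ('a \<Rightarrow> 'l1)) set" where
  "FC A B R sigma_p sigma_o nwP swO =
    {(chi X, chi Y) | X Y. X \<noteq> {} \<and> X \<subset> B \<and> Y \<noteq> {} \<and> Y \<subset> A \<and>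
        (chi X, chi Y) \<in> FN A B R sigma_p sigma_o nwP swO}"

definition Btop :: "'b set \<Rightarrow> ('b \<Rightarrow> 'l2::complete_lattice) \<Rightarrow> 'b set"
  where "Btop B g = {b\<in>B. g b = top}"
definition Bbot :: "'b set \<Rightarrow> ('b \<Rightarrow> 'l2::complete_lattice) \<Rightarrow> 'b set"
  where "Bbot B g = {b\<in>B. g b = bot}"
definition Atop :: "'a set \<Rightarrow> ('a \<Rightarrow> 'l1::complete_lattice) \<Rightarrow> 'a set"
  where "Atop A f = {a\<in>A. f a = top}"
definition Abot :: "'a set \<Rightarrow> ('a \<Rightarrow> 'l1::complete_lattice) \<Rightarrow> 'a set"
  where "Abot A f = {a\<in>A. f a = bot}"

end

theory Submission imports Defs begin

text \<open>On characteristic functions the implications of an adjoint triple without zero-divisors only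
  take the values \<open>\<top>\<close> and \<open>\<bottom>\<close>, so both fuzzy necessity operators reduce to the crisp necessity
  operators of the support relation \<open>R a b \<noteq> \<bottom>\<close>. For a crisp concept \<open>(X, Y)\<close> of these operators,
  normalization forces \<open>(B - X, A - Y)\<close> to be one as well, and the two concepts together split
  \<open>A\<close> and \<open>B\<close> as required. If \<open>L\<^sub>1\<close> or \<open>L\<^sub>2\<close> is trivial, both are, and a single pair suffices.\<close>

lemma adjoint_triple_swap:
  "adjoint_triple cj sw nw \<Longrightarrow> adjoint_triple (\<lambda>y x. cj x y) nw sw"
  unfolding adjoint_triple_def by blast

lemma conj_no_zero_div_swap:
  "conj_no_zero_div cj \<Longrightarrow> conj_no_zero_div (\<lambda>y x. cj x y)"
  unfolding conj_no_zero_div_def by blast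

lemma adjoint_triple_sw_top:
  fixes cj :: "'p1::order_top \<Rightarrow> 'p2::order \<Rightarrow> 'p3::order_top"
  assumes "adjoint_triple cj sw nw"
  shows "sw top y = top"
  using assms unfolding adjoint_triple_def by (metis top_greatest top_unique)

lemma adjoint_triple_conj_bot_right:
  fixes cj :: "'p1::order \<Rightarrow> 'p2::order_bot \<Rightarrow> 'p3::order_bot"
  assumes "adjoint_triple cj sw nw"
  shows "cj x bot = bot"
  using assms unfolding adjoint_triple_def by (metis bot_least bot_unique)

lemma adjoint_triple_sw_bot_right:
  fixes cj :: "'p1::order_top \<Rightarrow> 'p2::order_bot \<Rightarrow> 'p3::order_bot"
  assumes "adjoint_triple cj sw nw"
  shows "sw z bot = top"
  using assms adjoint_triple_conj_bot_right[OF assms] unfolding adjoint_triple_def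
  by (metis bot_least top_unique)

lemma adjoint_triple_sw_bot_left:
  fixes cj :: "'p1::order_bot \<Rightarrow> 'p2::order_bot \<Rightarrow> 'p3::order_bot"
  assumes "adjoint_triple cj sw nw" and "conj_no_zero_div cj" and "y \<noteq> bot"
  shows "sw bot y = bot"
proof -
  have "cj (sw bot y) y \<le> bot"
    using assms(1) unfolding adjoint_triple_def by blast
  then show ?thesis
    using assms(2,3) unfolding conj_no_zero_div_def by (metis bot_unique)
qed

lemma adjoint_triple_sw_chi:
  fixes cj :: "'p1::complete_lattice \<Rightarrow> 'p2::order_bot \<Rightarrow> 'p3::complete_lattice"
  assumes "adjoint_triple cj sw nw" and "conj_no_zero_div cj"
  shows "sw (chi X x) y = (if x \<in> X \<or> y = bot then top else bot)"
  using adjoint_triple_sw_top[OF assms(1)] adjoint_triple_sw_bot_right[OF assms(1)]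
    adjoint_triple_sw_bot_left[OF assms]
  by (simp add: chi_def)

lemma adjoint_triple_top_eq_bot:
  fixes cj :: "'p1::{order_bot,order_top} \<Rightarrow> 'p2::order_bot \<Rightarrow> 'p3::{order_bot,order_top}"
    and y :: 'p2
  assumes "adjoint_triple cj sw nw" and "conj_no_zero_div cj" and "y \<noteq> bot"
    and "(top::'p3) = bot"
  shows "(top::'p1) = bot"
  using adjoint_triple_sw_top[OF assms(1), of y] adjoint_triple_sw_bot_left[OF assms(1-3)] assms(4)
  by simp

lemma chi_eq_iff:
  "(top::'l::complete_lattice) \<noteq> bot \<Longrightarrow> (chi X x = (chi Y x :: 'l)) \<longleftrightarrow> (x \<in> X \<longleftrightarrow> x \<in> Y)"
  by (simp add: chi_def)

lemma INF_if_top_bot: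
  "(INF b\<in>B. (if P b then top else bot) :: 'l::complete_lattice) = (if \<forall>b\<in>B. P b then top else bot)"
proof (cases "\<forall>b\<in>B. P b")
  case False
  then obtain b where "b \<in> B" "\<not> P b" by blast
  then have "(INF b\<in>B. (if P b then top else bot) :: 'l) \<le> bot"
    by (metis (mono_tags, lifting) INF_lower)
  with False show ?thesis by (metis bot_unique)
qed simp

definition crisp_necessity :: "'b set \<Rightarrow> ('a \<Rightarrow> 'b \<Rightarrow> bool) \<Rightarrow> 'b set \<Rightarrow> 'a set"
  where "crisp_necessity B r X = {a. \<forall>b\<in>B. r a b \<longrightarrow> b \<in> X}"

lemma up_N_chi:
  assumes "\<And>b. b \<in> B \<Longrightarrow>
      adjoint_triple (cj (\<sigma> a b)) (sw (\<sigma> a b)) (nw (\<sigma> a b)) \<and> conj_no_zero_div (cj (\<sigma> a b))"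
  shows "up_N B R \<sigma> sw (chi X) a = chi (crisp_necessity B (\<lambda>a b. R a b \<noteq> bot) X) a"
proof -
  have "sw (\<sigma> a b) (chi X b) (R a b) = (if b \<in> X \<or> R a b = bot then top else bot)" if "b \<in> B" for b
    using assms[OF that] by (elim conjE) (rule adjoint_triple_sw_chi)
  then have "up_N B R \<sigma> sw (chi X) a = (INF b\<in>B. if b \<in> X \<or> R a b = bot then top else bot)"
    unfolding up_N_def by (rule INF_cong[OF refl])
  also have "\<dots> = chi (crisp_necessity B (\<lambda>a b. R a b \<noteq> bot) X) a"
    unfolding INF_if_top_bot by (auto simp: chi_def crisp_necessity_def)
  finally show ?thesis .
qed

lemma down_N_chi:
  assumes "\<And>a. a \<in> A \<Longrightarrow>
      adjoint_triple (cj (\<sigma> a b)) (sw (\<sigma> a b)) (nw (\<sigma> a b)) \<and> conj_no_zero_div (cj (\<sigma> a b))"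
  shows "down_N A R \<sigma> nw (chi Y) b = chi (crisp_necessity A (\<lambda>b a. R a b \<noteq> bot) Y) b"
proof -
  have "down_N A R \<sigma> nw (chi Y) b = up_N A (\<lambda>b a. R a b) (\<lambda>b a. \<sigma> a b) nw (chi Y) b"
    unfolding up_N_def down_N_def ..
  also have "\<dots> = chi (crisp_necessity A (\<lambda>b a. R a b \<noteq> bot) Y) b"
    using assms adjoint_triple_swap conj_no_zero_div_swap
    by (intro up_N_chi[where cj = "\<lambda>k y x. cj k x y" and nw = sw]) blast
  finally show ?thesis .
qed

lemma crisp_necessity_complement:
  assumes total: "\<forall>a\<in>A. \<exists>b\<in>B. r a b"
    and Y: "A \<inter> Y = A \<inter> crisp_necessity B r X"
    and X: "B \<inter> X = B \<inter> crisp_necessity A (\<lambda>b a. r a b) Y"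
  shows "A - Y = A \<inter> crisp_necessity B r (B - X)"
proof (intro equalityI subsetI)
  fix a assume a: "a \<in> A - Y"
  have "b \<notin> X" if "b \<in> B" "r a b" for b
    using a that X unfolding crisp_necessity_def by blast
  then show "a \<in> A \<inter> crisp_necessity B r (B - X)"
    using a unfolding crisp_necessity_def by blast
next
  fix a assume a: "a \<in> A \<inter> crisp_necessity B r (B - X)"
  then obtain b where "b \<in> B" "r a b" using total by blast
  then show "a \<in> A - Y"
    using a Y unfolding crisp_necessity_def by blast
qed

lemma chi_level_sets:
  assumes "(top::'l::complete_lattice) \<noteq> bot"
  shows "Btop B (chi X :: _ \<Rightarrow> 'l) = B \<inter> X" and "Bbot B (chi X :: _ \<Rightarrow> 'l) = B - X"
    and "Atop A (chi Y :: _ \<Rightarrow> 'l) = A \<inter> Y" and "Abot A (chi Y :: _ \<Rightarrow> 'l) = A - Y"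
  using assms by (auto simp: Btop_def Bbot_def Atop_def Abot_def chi_def)

lemma trivial_level_sets:
  assumes "(top::'l::complete_lattice) = bot"
  shows "Btop B (g :: _ \<Rightarrow> 'l) = B" and "Bbot B (g :: _ \<Rightarrow> 'l) = B"
    and "Atop A (f :: _ \<Rightarrow> 'l) = A" and "Abot A (f :: _ \<Rightarrow> 'l) = A"
proof -
  have all_bot: "(x::'l) = bot" for x
    using assms top_greatest[of x] by (simp add: bot_unique)
  then have "(x::'l) = top" for x
    by (metis assms)
  with all_bot show "Btop B g = B" "Bbot B g = B" "Atop A f = A" "Abot A f = A"
    unfolding Btop_def Bbot_def Atop_def Abot_def by blast+
qed

locale necessity_frames =
  fixes A :: "'a set" and B :: "'b set" and R :: "'a \<Rightarrow> 'b \<Rightarrow> 'p::order_bot"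
    and sigma_p sigma_o :: "'a \<Rightarrow> 'b \<Rightarrow> nat"
    and conjP :: "nat \<Rightarrow> 'p \<Rightarrow> 'l2::complete_lattice \<Rightarrow> 'l1::complete_lattice"
    and swP :: "nat \<Rightarrow> 'l1 \<Rightarrow> 'l2 \<Rightarrow> 'p" and nwP :: "nat \<Rightarrow> 'l1 \<Rightarrow> 'p \<Rightarrow> 'l2"
    and conjO :: "nat \<Rightarrow> 'l1 \<Rightarrow> 'p \<Rightarrow> 'l2"
    and swO :: "nat \<Rightarrow> 'l2 \<Rightarrow> 'p \<Rightarrow> 'l1" and nwO :: "nat \<Rightarrow> 'l2 \<Rightarrow> 'l1 \<Rightarrow> 'p"
  assumes prop_triples: "\<And>a b. a \<in> A \<Longrightarrow> b \<in> B \<Longrightarrow> adjoint_triple (conjP (sigma_p a b))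
      (swP (sigma_p a b)) (nwP (sigma_p a b)) \<and> conj_no_zero_div (conjP (sigma_p a b))"
    and obj_triples: "\<And>a b. a \<in> A \<Longrightarrow> b \<in> B \<Longrightarrow> adjoint_triple (conjO (sigma_o a b))
      (swO (sigma_o a b)) (nwO (sigma_o a b)) \<and> conj_no_zero_div (conjO (sigma_o a b))"
begin

lemma top_eq_bot_L1_iff_L2:
  assumes "normalized_context A B R" and "A \<noteq> {}"
  shows "(top::'l1) = bot \<longleftrightarrow> (top::'l2) = bot"
proof -
  obtain a b where ab: "a \<in> A" "b \<in> B" and "R a b \<noteq> bot"
    using assms unfolding normalized_context_def by blast
  then have "(top::'l2) = bot \<Longrightarrow> (top::'l1) = bot" and "(top::'l1) = bot \<Longrightarrow> (top::'l2) = bot"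
    using obj_triples[OF ab] prop_triples[OF ab]
    by (meson adjoint_triple_top_eq_bot adjoint_triple_swap conj_no_zero_div_swap)+
  then show ?thesis by blast
qed

lemma chi_pair_in_FN_iff:
  assumes "(top::'l1) \<noteq> bot" and "(top::'l2) \<noteq> bot"
  shows "(chi X :: 'b \<Rightarrow> 'l2, chi Y :: 'a \<Rightarrow> 'l1) \<in> FN A B R sigma_p sigma_o nwP swO \<longleftrightarrow>
    A \<inter> Y = A \<inter> crisp_necessity B (\<lambda>a b. R a b \<noteq> bot) X \<and>
    B \<inter> X = B \<inter> crisp_necessity A (\<lambda>b a. R a b \<noteq> bot) Y"
proof -
  have up: "up_N B R sigma_o swO (chi X) a = chi (crisp_necessity B (\<lambda>a b. R a b \<noteq> bot) X) a"
    if "a \<in> A" for a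
    using obj_triples[OF that] by (rule up_N_chi[where cj = conjO and nw = nwO])
  have down: "down_N A R sigma_p nwP (chi Y) b = chi (crisp_necessity A (\<lambda>b a. R a b \<noteq> bot) Y) b"
    if "b \<in> B" for b
    using prop_triples[OF _ that] by (rule down_N_chi[where cj = conjP and sw = swP])
  have "(\<forall>a\<in>A. up_N B R sigma_o swO (chi X) a = chi Y a) \<longleftrightarrow>
      A \<inter> Y = A \<inter> crisp_necessity B (\<lambda>a b. R a b \<noteq> bot) X"
    by (auto simp: up chi_eq_iff[OF assms(1)])
  moreover have "(\<forall>b\<in>B. down_N A R sigma_p nwP (chi Y) b = chi X b) \<longleftrightarrow>
      B \<inter> X = B \<inter> crisp_necessity A (\<lambda>b a. R a b \<noteq> bot) Y"
    by (auto simp: down chi_eq_iff[OF assms(2)])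
  ultimately show ?thesis unfolding FN_def by simp
qed

lemma complement_chi_pair_in_FC:
  assumes nontrivial: "(top::'l1) \<noteq> bot" "(top::'l2) \<noteq> bot"
    and normalized: "normalized_context A B R"
    and X: "X \<noteq> {}" "X \<subset> B" and Y: "Y \<noteq> {}" "Y \<subset> A"
    and XY: "(chi X :: 'b \<Rightarrow> 'l2, chi Y :: 'a \<Rightarrow> 'l1) \<in> FN A B R sigma_p sigma_o nwP swO"
  shows "(chi (B - X) :: 'b \<Rightarrow> 'l2, chi (A - Y) :: 'a \<Rightarrow> 'l1) \<in> FC A B R sigma_p sigma_o nwP swO"
proof -
  let ?r = "\<lambda>a b. R a b \<noteq> bot"
  note FN_iff = chi_pair_in_FN_iff[OF nontrivial]
  have Y_eq: "A \<inter> Y = A \<inter> crisp_necessity B ?r X"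
    and X_eq: "B \<inter> X = B \<inter> crisp_necessity A (\<lambda>b a. ?r a b) Y"
    using XY FN_iff by simp_all
  have "\<forall>a\<in>A. \<exists>b\<in>B. ?r a b" and "\<forall>b\<in>B. \<exists>a\<in>A. ?r a b"
    using normalized unfolding normalized_context_def by auto
  then have "A - Y = A \<inter> crisp_necessity B ?r (B - X)"
    and "B - X = B \<inter> crisp_necessity A (\<lambda>b a. ?r a b) (A - Y)"
    using crisp_necessity_complement[OF _ Y_eq X_eq]
      crisp_necessity_complement[of B A "\<lambda>b a. ?r a b", OF _ X_eq Y_eq]
    by simp_all
  then have "(chi (B - X) :: 'b \<Rightarrow> 'l2, chi (A - Y) :: 'a \<Rightarrow> 'l1) \<in> FN A B R sigma_p sigma_o nwP swO"
    using FN_iff by (simp add: Int_absorb1)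
  with X Y show ?thesis
    unfolding FC_def by blast
qed

end

theorem mainTheorem6:
  fixes A :: "'a set" and B :: "'b set" and R :: "'a \<Rightarrow> 'b \<Rightarrow> 'p::{order_bot,order_top}"
    and n m s :: nat
    and conjM :: "nat \<Rightarrow> 'l1::complete_lattice \<Rightarrow> 'l2::complete_lattice \<Rightarrow> 'p"
    and swM :: "nat \<Rightarrow> 'p \<Rightarrow> 'l2 \<Rightarrow> 'l1" and nwM :: "nat \<Rightarrow> 'p \<Rightarrow> 'l1 \<Rightarrow> 'l2"
    and conjP :: "nat \<Rightarrow> 'p \<Rightarrow> 'l2 \<Rightarrow> 'l1"
    and swP :: "nat \<Rightarrow> 'l1 \<Rightarrow> 'l2 \<Rightarrow> 'p" and nwP :: "nat \<Rightarrow> 'l1 \<Rightarrow> 'p \<Rightarrow> 'l2"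
    and conjO :: "nat \<Rightarrow> 'l1 \<Rightarrow> 'p \<Rightarrow> 'l2"
    and swO :: "nat \<Rightarrow> 'l2 \<Rightarrow> 'p \<Rightarrow> 'l1" and nwO :: "nat \<Rightarrow> 'l2 \<Rightarrow> 'l1 \<Rightarrow> 'p"
    and sigma sigma_p sigma_o :: "'a \<Rightarrow> 'b \<Rightarrow> nat"
  assumes multi_frame: "\<forall>i\<in>{1..n}. adjoint_triple (conjM i) (swM i) (nwM i) \<and> conj_no_zero_div (conjM i)"
    and prop_frame: "\<forall>j\<in>{1..m}. adjoint_triple (conjP j) (swP j) (nwP j) \<and> conj_no_zero_div (conjP j)"
    and obj_frame: "\<forall>k\<in>{1..s}. adjoint_triple (conjO k) (swO k) (nwO k) \<and> conj_no_zero_div (conjO k)"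
    and A_ne: "A \<noteq> {}" and B_ne: "B \<noteq> {}"
    and sigma_range: "\<forall>a\<in>A. \<forall>b\<in>B. sigma a b \<in> {1..n}"
    and sigma_p_range: "\<forall>a\<in>A. \<forall>b\<in>B. sigma_p a b \<in> {1..m}"
    and sigma_o_range: "\<forall>a\<in>A. \<forall>b\<in>B. sigma_o a b \<in> {1..s}"
    and normalized: "normalized_context A B R"
    and FC_ne: "FC A B R sigma_p sigma_o nwP swO \<noteq> {}"
  shows "\<exists>I. I \<subseteq> FC A B R sigma_p sigma_o nwP swO \<and>
    B = (\<Union>(g, f)\<in>I. Btop B g) \<and>
    (\<forall>(g, f)\<in>I. \<forall>(g', f')\<in>I. (g, f) \<noteq> (g', f') \<longrightarrow> Btop B g \<inter> Btop B g' = {}) \<and>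
    B = (\<Union>(g, f)\<in>I. Bbot B g) \<and>
    (\<forall>(g, f)\<in>I. \<forall>(g', f')\<in>I. (g, f) \<noteq> (g', f') \<longrightarrow> Bbot B g \<inter> Bbot B g' = {}) \<and>
    A = (\<Union>(g, f)\<in>I. Atop A f) \<and>
    (\<forall>(g, f)\<in>I. \<forall>(g', f')\<in>I. (g, f) \<noteq> (g', f') \<longrightarrow> Atop A f \<inter> Atop A f' = {}) \<and>
    A = (\<Union>(g, f)\<in>I. Abot A f) \<and>
    (\<forall>(g, f)\<in>I. \<forall>(g', f')\<in>I. (g, f) \<noteq> (g', f') \<longrightarrow> Abot A f \<inter> Abot A f' = {})"
proof -
  interpret necessity_frames A B R sigma_p sigma_o conjP swP nwP conjO swO nwO
    by unfold_locales (use prop_frame sigma_p_range obj_frame sigma_o_range in blast)+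
  obtain X Y where X: "X \<noteq> {}" "X \<subset> B" and Y: "Y \<noteq> {}" "Y \<subset> A"
    and XY_FN: "(chi X, chi Y) \<in> FN A B R sigma_p sigma_o nwP swO"
    using FC_ne unfolding FC_def by blast
  then have XY_FC: "(chi X, chi Y) \<in> FC A B R sigma_p sigma_o nwP swO"
    unfolding FC_def by blast
  note trivial_iff = top_eq_bot_L1_iff_L2[OF normalized A_ne]
  show ?thesis
  proof (cases "(top::'l2) = bot")
    case True
    with trivial_iff show ?thesis
      by (intro exI[of _ "{(chi X, chi Y)}"]) (simp add: XY_FC trivial_level_sets)
  next
    case False
    with trivial_iff have nontrivial: "(top::'l1) \<noteq> bot" "(top::'l2) \<noteq> bot" by auto
    have "(chi (B - X), chi (A - Y)) \<in> FC A B R sigma_p sigma_o nwP swO"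
      using nontrivial normalized X Y XY_FN by (rule complement_chi_pair_in_FC)
    moreover have "(chi X :: 'b \<Rightarrow> 'l2) \<noteq> chi (B - X)"
      using X nontrivial(2) by (metis Diff_iff chi_eq_iff ex_in_conv)
    ultimately show ?thesis using XY_FC X Y
      by (intro exI[of _ "{(chi X, chi Y), (chi (B - X), chi (A - Y))}"])
        (auto simp: chi_level_sets[OF nontrivial(1)] chi_level_sets[OF nontrivial(2)])
  qed
qed

end
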